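(* Let $n\ge 1$ and $u,v\in\mathsf{Tr}(n)$. Then $v$ covers $u$ in the poset $(\mathsf{Tr}(n),\preccurlyeq)$ if and only if $u\preccurlyeq v$, there is exactly one index $i$ with $u_i<v_i$, and every $w\in\mathsf{Tr}(n)$ with $u\preccurlyeq w\preccurlyeq v$ satisfies $w=u$ or $w=v$. In particular, two triwords in a covering relation differ in exactly one letter.
   Context: A triword of size $n$ is a word $u=u_1\cdots u_n$ with $u_i\in\{0,1,2\}$, $u_1\ne 2$, and such that $u_i=0$ implies $u_j\neq 1$ for all $j>i$; $\mathsf{Tr}(n)$ denotes their set. The order $\preccurlyeq$ on $\mathsf{Tr}(n)$ is the componentwise order: $u\preccurlyeq v$ iff $u_i\le v_i$ for all $i\in[n]$. *)

theory Defs
  imports Main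
begin

text \<open>Words u = u_1 ... u_n are represented as lists of naturals of length n;
  the letter u_i is u ! (i-1), indices range over {0..<n}.\<close>

definition triword :: "nat \<Rightarrow> nat list \<Rightarrow> bool" where
  "triword n u \<longleftrightarrow> length u = n \<and> (\<forall>i<n. u ! i \<in> {0,1,2})
     \<and> (n \<ge> 1 \<longrightarrow> u ! 0 \<noteq> 2)
     \<and> (\<forall>i<n. \<forall>j<n. i < j \<and> u ! i = 0 \<longrightarrow> u ! j \<noteq> 1)"

definition Tr :: "nat \<Rightarrow> nat list set" where
  "Tr n = {u. triword n u}"

definition tr_le :: "nat \<Rightarrow> nat list \<Rightarrow> nat list \<Rightarrow> bool" where
  "tr_le n u v \<longleftrightarrow> (\<forall>i<n. u ! i \<le> v ! i)"

definition tr_covers :: "nat \<Rightarrow> nat list \<Rightarrow> nat list \<Rightarrow> bool" where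
  "tr_covers n u v \<longleftrightarrow> u \<in> Tr n \<and> v \<in> Tr n \<and> tr_le n u v \<and> u \<noteq> v
     \<and> \<not> (\<exists>w\<in>Tr n. tr_le n u w \<and> tr_le n w v \<and> w \<noteq> u \<and> w \<noteq> v)"

end

theory Submission
  imports Defs
begin

text \<open>If \<open>u \<preccurlyeq> v\<close> differ at two positions \<open>a < b\<close>, then the word that agrees with \<open>v\<close>
  before \<open>b\<close> and with \<open>u\<close> from \<open>b\<close> on lies strictly between them, and it is again a triword:
  a \<open>0\<close> of \<open>v\<close> is also a \<open>0\<close> of \<open>u\<close>, so a \<open>0\<close> in the first part forbids a \<open>1\<close> in the second.\<close>

lemma nth_take_append_drop:
  assumes "length u = length v" and "i < length u"
  shows "(take k v @ drop k u) ! i = (if i < k then v ! i else u ! i)"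
  using assms by (auto simp: nth_append min_def)

lemma triword_take_append_drop:
  assumes u: "triword n u" and v: "triword n v" and le: "tr_le n u v"
  shows "triword n (take k v @ drop k u)"
proof -
  have len: "length u = n" "length v = n"
    using u v by (auto simp: triword_def)
  define w where "w = take k v @ drop k u"
  have w: "\<And>i. i < n \<Longrightarrow> w ! i = (if i < k then v ! i else u ! i)"
    unfolding w_def using len nth_take_append_drop by metis
  have zero_from_v: "u ! i = 0" if "i < n" "v ! i = 0" for i
    using le that by (auto simp: tr_le_def)
  have no_one_after_zero: "x ! j \<noteq> 1" if "triword n x" "i < j" "j < n" "x ! i = 0" for x i j
    using that unfolding triword_def by (meson less_trans)
  have "w ! j \<noteq> 1" if ij: "i < j" "j < n" "w ! i = 0" for i j
    using ij no_one_after_zero[OF u, of i j] no_one_after_zero[OF v, of i j] zero_from_v[of i]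
    by (simp add: w split: if_splits)
  moreover have "w ! i \<in> {0, 1, 2}" if "i < n" for i
    using that u v by (simp add: w triword_def)
  moreover have "n \<ge> 1 \<longrightarrow> w ! 0 \<noteq> 2"
    using u v by (simp add: w triword_def)
  moreover have "length w = n"
    using len by (simp add: w_def)
  ultimately show ?thesis
    unfolding triword_def w_def[symmetric] by blast
qed

lemma tr_le_take_append_drop:
  assumes "tr_le n u v" and "length u = n" and "length v = n"
  shows "tr_le n u (take k v @ drop k u)" and "tr_le n (take k v @ drop k u) v"
  using assms by (auto simp: tr_le_def nth_take_append_drop)

lemma strictly_between_if_two_increases:
  assumes u: "u \<in> Tr n" and v: "v \<in> Tr n" and le: "tr_le n u v"
    and "a < b" "b < n" and "u ! a < v ! a" "u ! b < v ! b"
  shows "\<exists>w\<in>Tr n. tr_le n u w \<and> tr_le n w v \<and> w \<noteq> u \<and> w \<noteq> v"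
proof -
  have len: "length u = n" "length v = n"
    using u v by (auto simp: Tr_def triword_def)
  define w where "w = take b v @ drop b u"
  have "w \<in> Tr n"
    using u v le triword_take_append_drop by (simp add: Tr_def w_def)
  moreover have "w ! a = v ! a" "w ! b = u ! b"
    using assms len by (simp_all add: w_def nth_take_append_drop)
  ultimately show ?thesis
    using assms len tr_le_take_append_drop unfolding w_def by (metis less_irrefl)
qed

lemma tr_covers_unique_increase:
  assumes "tr_covers n u v"
  shows "\<exists>!i. i < n \<and> u ! i < v ! i"
proof -
  have u: "u \<in> Tr n" and v: "v \<in> Tr n" and le: "tr_le n u v" and "u \<noteq> v"
    using assms by (auto simp: tr_covers_def)
  then have "\<exists>i<n. u ! i \<noteq> v ! i"
    by (metis Tr_def mem_Collect_eq nth_equalityI triword_def)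
  then obtain i where i: "i < n" "u ! i < v ! i"
    using le by (force simp: tr_le_def)
  have "j = i" if "j < n" "u ! j < v ! j" for j
    using strictly_between_if_two_increases[OF u v le] assms i that
    unfolding tr_covers_def by (metis linorder_neqE_nat)
  with i show ?thesis by blast
qed

theorem proposition1p3:
  fixes n :: nat and u v :: "nat list"
  assumes "n \<ge> 1" and "u \<in> Tr n" and "v \<in> Tr n"
  shows "(tr_covers n u v \<longleftrightarrow>
            tr_le n u v \<and> (\<exists>!i. i < n \<and> u ! i < v ! i)
            \<and> (\<forall>w\<in>Tr n. tr_le n u w \<and> tr_le n w v \<longrightarrow> w = u \<or> w = v))
         \<and> (tr_covers n u v \<longrightarrow> (\<exists>!i. i < n \<and> u ! i \<noteq> v ! i))"
proof -
  have differ_iff_increase: "(\<lambda>i. i < n \<and> u ! i \<noteq> v ! i) = (\<lambda>i. i < n \<and> u ! i < v ! i)"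
    if "tr_le n u v"
    using that by (force simp: tr_le_def)
  have "tr_covers n u v" if "tr_le n u v" "\<exists>!i. i < n \<and> u ! i < v ! i"
      "\<forall>w\<in>Tr n. tr_le n u w \<and> tr_le n w v \<longrightarrow> w = u \<or> w = v"
    using that assms unfolding tr_covers_def by auto
  then show ?thesis
    using tr_covers_unique_increase[of n u v] differ_iff_increase
    by (auto simp: tr_covers_def)
qed

end
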